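(* Let $\pi$ be an irreducible $\psi$-generic representation of $\mathrm{SO}_{2l}$ and let $W\in\mathcal W(\pi,\psi)$ with $W(I_{2l})=1$. Then $W_m\in\mathcal W(\pi,\psi)$ for every integer $m\ge1$.
   Context: $F$ is a non-Archimedean local field of characteristic $0$, with maximal ideal $\mathfrak p$, uniformizer $\varpi$, and a nontrivial unramified additive character $\psi$. $J_n$ is the antidiagonal matrix of $1$'s. $\rho\in F^\times$ is a non-square, and $J_{2l,\rho}=\mathrm{diag}(I_{l-1},\begin{pmatrix}0&1\\-\rho&0\end{pmatrix},I_{l-1})J_{2l}$. Then $\mathrm{SO}_{2l}=\{g\in\mathrm{GL}_{2l}(F):\det g=1,{}^tgJ_{2l,\rho}g=J_{2l,\rho}\}$, with upper unipotent subgroup $U$ and generic character $\psi(u)=\psi(\sum_{i=1}^{l-2}u_{i,i+1}+\frac12u_{l-1,l+1})$. $\pi$ is $\psi$-generic if $\mathrm{Hom}_U(\pi,\psi)\ne0$. For a fixed nonzero $\Gamma$ in this space, $\mathcal W(\pi,\psi)=\{g\mapsto\Gamma(\pi(g)v):v\in\pi\}$. Let $K_m=(I_{2l}+\mathrm{Mat}_{2l}(\mathfrak p^m))\cap\mathrm{SO}_{2l}$, $\tau_m(k)=\psi(\varpi^{-2m}(\sum_{i=1}^{l-2}k_{i,i+1}+\frac12k_{l-1,l+1}))$, $e_m=\mathrm{diag}(\varpi^{-2m(l-1)},\dots,\varpi^{-2m},1,1,\varpi^{2m},\dots,\varpi^{2m(l-1)})$, $H_m=e_mK_me_m^{-1}$,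 $\psi_m(h)=\tau_m(e_m^{-1}he_m)$ and $U_m=U\cap H_m$. Then $W_m(g)=\mathrm{Vol}(U_m)^{-1}\int_{U_m}\psi_m^{-1}(u)W(gu)du$. *)

theory Defs
  imports Complex_Main "Jordan_Normal_Form.Determinant"
begin

text \<open>The field F is a type of class field_char_0 equipped with a normalized discrete
valuation v (the value v 0 is irrelevant). in_pow v k x means x lies in p^k.\<close>

definition in_pow :: "('f::field \<Rightarrow> int) \<Rightarrow> int \<Rightarrow> 'f \<Rightarrow> bool" where
  "in_pow v k x \<longleftrightarrow> x = 0 \<or> k \<le> v x"

definition nonarch_local_field :: "('f::field_char_0 \<Rightarrow> int) \<Rightarrow> bool" where
  "nonarch_local_field v \<longleftrightarrow>
     (\<forall>x y. x \<noteq> 0 \<longrightarrow> y \<noteq> 0 \<longrightarrow> v (x * y) = v x + v y) \<and>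
     (\<forall>x y. x \<noteq> 0 \<longrightarrow> y \<noteq> 0 \<longrightarrow> x + y \<noteq> 0 \<longrightarrow> min (v x) (v y) \<le> v (x + y)) \<and>
     (\<exists>x. x \<noteq> 0 \<and> v x = 1) \<and>
     \<comment> \<open>complete with respect to the valuation\<close>
     (\<forall>X :: nat \<Rightarrow> 'f. (\<forall>k. \<exists>N. \<forall>n\<ge>N. \<forall>n'\<ge>N. in_pow v k (X n - X n')) \<longrightarrow>
        (\<exists>L. \<forall>k. \<exists>N. \<forall>n\<ge>N. in_pow v k (X n - L))) \<and>
     \<comment> \<open>finite residue field O/p\<close>
     (\<exists>R. finite R \<and> (\<forall>x. in_pow v 0 x \<longrightarrow> (\<exists>r\<in>R. in_pow v 1 (x - r))))"

definition uniformizer :: "('f::field \<Rightarrow> int) \<Rightarrow> 'f \<Rightarrow> bool" where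
  "uniformizer v w \<longleftrightarrow> w \<noteq> 0 \<and> v w = 1"

text \<open>Nontrivial unramified additive character: trivial on O, nontrivial on p^(-1).\<close>
definition unramified_additive_char :: "('f::field \<Rightarrow> int) \<Rightarrow> ('f \<Rightarrow> complex) \<Rightarrow> bool" where
  "unramified_additive_char v \<psi> \<longleftrightarrow>
     (\<forall>x y. \<psi> (x + y) = \<psi> x * \<psi> y) \<and> (\<forall>x. norm (\<psi> x) = 1) \<and>
     (\<forall>x. in_pow v 0 x \<longrightarrow> \<psi> x = 1) \<and>
     (\<exists>x. in_pow v (-1) x \<and> \<psi> x \<noteq> 1)"

section \<open>The quasi-split group SO_2l (matrices indexed 0..2l-1)\<close>

definition Jmat :: "nat \<Rightarrow> 'f::field mat" where
  "Jmat n = mat n n (\<lambda>(i,j). if i + j = n - 1 then 1 else 0)"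

definition Jrho :: "nat \<Rightarrow> 'f::field \<Rightarrow> 'f mat" where
  "Jrho l \<rho> = mat (2*l) (2*l) (\<lambda>(i,j).
       if i = j \<and> (i < l - 1 \<or> l < i) then 1
       else if i = l - 1 \<and> j = l then 1
       else if i = l \<and> j = l - 1 then - \<rho>
       else 0) * Jmat (2*l)"

definition SO :: "nat \<Rightarrow> 'f::field \<Rightarrow> 'f mat set" where
  "SO l \<rho> = {g \<in> carrier_mat (2*l) (2*l). det g = 1 \<and> transpose_mat g * Jrho l \<rho> * g = Jrho l \<rho>}"

definition Uunip :: "nat \<Rightarrow> 'f::field \<Rightarrow> 'f mat set" where
  "Uunip l \<rho> = {u \<in> SO l \<rho>. \<forall>i<2*l. \<forall>j<2*l. (j < i \<longrightarrow> u $$ (i,j) = 0) \<and> (i = j \<longrightarrow> u $$ (i,j) = 1)}"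

text \<open>Generic character psi(u) = psi(sum_{i=1}^{l-2} u_{i,i+1} + 1/2 u_{l-1,l+1}) (1-based),
written 0-based.\<close>
definition psiU :: "('f::field_char_0 \<Rightarrow> complex) \<Rightarrow> nat \<Rightarrow> 'f mat \<Rightarrow> complex" where
  "psiU \<psi> l u = \<psi> ((\<Sum>i<l-2. u $$ (i, i+1)) + u $$ (l-2, l) / 2)"

definition Kcong :: "('f::field \<Rightarrow> int) \<Rightarrow> nat \<Rightarrow> 'f \<Rightarrow> int \<Rightarrow> 'f mat set" where
  "Kcong v l \<rho> m = {g \<in> SO l \<rho>. \<forall>i<2*l. \<forall>j<2*l. in_pow v m (g $$ (i,j) - 1\<^sub>m (2*l) $$ (i,j))}"

definition tau :: "('f::field_char_0 \<Rightarrow> complex) \<Rightarrow> 'f \<Rightarrow> nat \<Rightarrow> int \<Rightarrow> 'f mat \<Rightarrow> complex" where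
  "tau \<psi> w l m k = \<psi> (w powi (-2*m) * ((\<Sum>i<l-2. k $$ (i, i+1)) + k $$ (l-2, l) / 2))"

text \<open>e_m = diag(w^(-2m(l-1)),...,w^(-2m),1,1,w^(2m),...,w^(2m(l-1))); note emat w l (-m) is
its inverse.\<close>
definition emat :: "'f::field \<Rightarrow> nat \<Rightarrow> int \<Rightarrow> 'f mat" where
  "emat w l m = mat (2*l) (2*l) (\<lambda>(i,j). if i = j then
       (if i < l then w powi (- (2*m*(int l - 1 - int i))) else w powi (2*m*(int i - int l)))
     else 0)"

definition Hm :: "('f::field \<Rightarrow> int) \<Rightarrow> 'f \<Rightarrow> nat \<Rightarrow> 'f \<Rightarrow> int \<Rightarrow> 'f mat set" where
  "Hm v w l \<rho> m = {emat w l m * k * emat w l (-m) | k. k \<in> Kcong v l \<rho> m}"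

definition psim :: "('f::field_char_0 \<Rightarrow> complex) \<Rightarrow> 'f \<Rightarrow> nat \<Rightarrow> int \<Rightarrow> 'f mat \<Rightarrow> complex" where
  "psim \<psi> w l m h = tau \<psi> w l m (emat w l (-m) * h * emat w l m)"

definition Um :: "('f::field \<Rightarrow> int) \<Rightarrow> 'f \<Rightarrow> nat \<Rightarrow> 'f \<Rightarrow> int \<Rightarrow> 'f mat set" where
  "Um v w l \<rho> m = Uunip l \<rho> \<inter> Hm v w l \<rho> m"

text \<open>For a compact open subgroup S of SO_2l and a function f on S that is right invariant
under a principal congruence subgroup S \<inter> (I + Mat(p^k)), the normalized Haar integral
Vol(S)^(-1) \<integral>_S f is the average of f over the finitely many cosets.\<close>
definition cong_sub :: "('f::field \<Rightarrow> int) \<Rightarrow> nat \<Rightarrow> int \<Rightarrow> 'f mat set" where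
  "cong_sub v n k = {g \<in> carrier_mat n n. \<forall>i<n. \<forall>j<n. in_pow v k (g $$ (i,j) - 1\<^sub>m n $$ (i,j))}"

definition haar_avg :: "('f::field \<Rightarrow> int) \<Rightarrow> nat \<Rightarrow> 'f mat set \<Rightarrow> ('f mat \<Rightarrow> complex) \<Rightarrow> complex" where
  "haar_avg v n S f = (THE c. \<exists>k\<ge>1.
     let N = S \<inter> cong_sub v n k; Cs = (\<lambda>u. (\<lambda>y. u * y) ` N) ` S in
       finite Cs \<and> (\<forall>x\<in>S. \<forall>y\<in>N. f (x * y) = f x) \<and>
       c = (\<Sum>C\<in>Cs. f (SOME x. x \<in> C)) / of_nat (card Cs))"

text \<open>W_m(g) = Vol(U_m)^(-1) \<integral>_{U_m} psi_m^(-1)(u) W(gu) du.\<close>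
definition Wm :: "('f::field_char_0 \<Rightarrow> int) \<Rightarrow> 'f \<Rightarrow> ('f \<Rightarrow> complex) \<Rightarrow> nat \<Rightarrow> 'f \<Rightarrow> int
                   \<Rightarrow> ('f mat \<Rightarrow> complex) \<Rightarrow> 'f mat \<Rightarrow> complex" where
  "Wm v w \<psi> l \<rho> m W g = haar_avg v (2*l) (Um v w l \<rho> m) (\<lambda>u. inverse (psim \<psi> w l m u) * W (g * u))"

definition smooth_rep :: "('f::field \<Rightarrow> int) \<Rightarrow> nat \<Rightarrow> 'f \<Rightarrow> (complex \<Rightarrow> 'v::ab_group_add \<Rightarrow> 'v)
                           \<Rightarrow> ('f mat \<Rightarrow> 'v \<Rightarrow> 'v) \<Rightarrow> bool" where
  "smooth_rep v l \<rho> sm \<pi> \<longleftrightarrow>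
     vector_space sm \<and>
     (\<forall>g\<in>SO l \<rho>. Vector_Spaces.linear sm sm (\<pi> g)) \<and>
     \<pi> (1\<^sub>m (2*l)) = id \<and>
     (\<forall>g\<in>SO l \<rho>. \<forall>h\<in>SO l \<rho>. \<pi> (g * h) = \<pi> g \<circ> \<pi> h) \<and>
     (\<forall>x. \<exists>m\<ge>1. \<forall>k\<in>Kcong v l \<rho> m. \<pi> k x = x)"

definition irreducible_rep :: "nat \<Rightarrow> 'f::field \<Rightarrow> (complex \<Rightarrow> 'v::ab_group_add \<Rightarrow> 'v)
                           \<Rightarrow> ('f mat \<Rightarrow> 'v \<Rightarrow> 'v) \<Rightarrow> bool" where
  "irreducible_rep l \<rho> sm \<pi> \<longleftrightarrow>
     (UNIV :: 'v set) \<noteq> {0} \<and>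
     (\<forall>S. module.subspace sm S \<and> (\<forall>g\<in>SO l \<rho>. \<forall>x\<in>S. \<pi> g x \<in> S) \<longrightarrow> S = {0} \<or> S = UNIV)"

definition whittaker_functional :: "('f::field_char_0 \<Rightarrow> complex) \<Rightarrow> nat \<Rightarrow> 'f
      \<Rightarrow> (complex \<Rightarrow> 'v::ab_group_add \<Rightarrow> 'v) \<Rightarrow> ('f mat \<Rightarrow> 'v \<Rightarrow> 'v) \<Rightarrow> ('v \<Rightarrow> complex) \<Rightarrow> bool" where
  "whittaker_functional \<psi> l \<rho> sm \<pi> \<Gamma> \<longleftrightarrow>
     Vector_Spaces.linear sm (*) \<Gamma> \<and>
     (\<forall>u\<in>Uunip l \<rho>. \<forall>x. \<Gamma> (\<pi> u x) = psiU \<psi> l u * \<Gamma> x)"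

text \<open>W(pi,psi) = {g \<mapsto> Gamma(pi(g)x)}; functions are compared on SO_2l(F) only.\<close>
definition whittaker_model :: "nat \<Rightarrow> 'f::field \<Rightarrow> ('f mat \<Rightarrow> 'v \<Rightarrow> 'v) \<Rightarrow> ('v \<Rightarrow> complex)
      \<Rightarrow> ('f mat \<Rightarrow> complex) set" where
  "whittaker_model l \<rho> \<pi> \<Gamma> = {W. \<exists>x. \<forall>g\<in>SO l \<rho>. W g = \<Gamma> (\<pi> g x)}"

end

theory Submission
  imports Defs "HOL-Algebra.Left_Coset"
begin

text \<open>
  The integral defining \<open>W\<^sub>m\<close> is a finite average of right translates of \<open>W\<close>.
  Write \<open>W g = \<Gamma> (\<pi> g x)\<close> and fix \<open>k\<close> so large that \<open>x\<close> is fixed by \<open>K\<^sub>k\<close> and that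
  \<open>\<psi>\<^sub>m\<close> is invariant under right translation by \<open>N\<^sub>k = U\<^sub>m \<inter> (I + Mat(p\<^sup>k))\<close>; the
  latter holds because \<open>U\<^sub>m\<close> has entries of bounded valuation and \<open>\<psi>\<close> is unramified.
  The integrand \<open>u \<mapsto> \<psi>\<^sub>m(u)\<^sup>-\<^sup>1 W(g u)\<close> is then right \<open>N\<^sub>k\<close>-invariant, and its
  normalized integral is its average over the cosets \<open>U\<^sub>m / N\<^sub>k\<close>, of which there are
  finitely many because the residue field is finite. Hence
  \<open>W\<^sub>m g = \<Sigma>\<^sub>C c\<^sub>C W (g u\<^sub>C) = \<Gamma> (\<pi> g x')\<close> with \<open>x' = \<Sigma>\<^sub>C c\<^sub>C \<pi> u\<^sub>C x\<close>.
\<close>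

section \<open>Valuations\<close>

locale local_field =
  fixes v :: "'f::field_char_0 \<Rightarrow> int" and w :: 'f
  assumes nonarch: "nonarch_local_field v"
    and uniformizer: "uniformizer v w"
begin

lemma valuation_mult: "x \<noteq> 0 \<Longrightarrow> y \<noteq> 0 \<Longrightarrow> v (x * y) = v x + v y"
  using nonarch unfolding nonarch_local_field_def by blast

lemma valuation_add: "x \<noteq> 0 \<Longrightarrow> y \<noteq> 0 \<Longrightarrow> x + y \<noteq> 0 \<Longrightarrow> min (v x) (v y) \<le> v (x + y)"
  using nonarch unfolding nonarch_local_field_def by blast

lemma valuation_one: "v 1 = 0"
  using valuation_mult[of 1 1] by simp

lemma valuation_inverse: "x \<noteq> 0 \<Longrightarrow> v (inverse x) = - v x"
  using valuation_mult[of x "inverse x"] valuation_one by simp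

lemma valuation_uminus: "x \<noteq> 0 \<Longrightarrow> v (- x) = v x"
  using valuation_mult[of "-1" "-1"] valuation_mult[of "-1" x] valuation_one by simp

lemma valuation_power_int: "x \<noteq> 0 \<Longrightarrow> v (x powi n) = n * v x"
proof -
  assume x: "x \<noteq> 0"
  have "v (x ^ k) = int k * v x" for k
    by (induction k) (simp_all add: x valuation_one valuation_mult algebra_simps)
  then show ?thesis
    using x by (cases "n \<ge> 0") (auto simp: power_int_def power_inverse valuation_inverse)
qed

lemma uniformizer_nonzero: "w \<noteq> 0"
  using uniformizer unfolding uniformizer_def by simp

lemma in_pow_zero [simp]: "in_pow v k 0"
  by (simp add: in_pow_def)

lemma in_pow_one: "in_pow v 0 1"
  by (simp add: in_pow_def valuation_one)

lemma in_pow_mono: "a \<le> b \<Longrightarrow> in_pow v b x \<Longrightarrow> in_pow v a x"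
  unfolding in_pow_def by auto

lemma in_pow_add: "in_pow v k x \<Longrightarrow> in_pow v k y \<Longrightarrow> in_pow v k (x + y)"
  unfolding in_pow_def using valuation_add[of x y] by fastforce

lemma in_pow_uminus: "in_pow v k x \<Longrightarrow> in_pow v k (- x)"
  unfolding in_pow_def using valuation_uminus[of x] by fastforce

lemma in_pow_diff: "in_pow v k x \<Longrightarrow> in_pow v k y \<Longrightarrow> in_pow v k (x - y)"
  using in_pow_add[of k x "- y"] in_pow_uminus[of k y] by simp

lemma in_pow_mult: "in_pow v a x \<Longrightarrow> in_pow v b y \<Longrightarrow> in_pow v (a + b) (x * y)"
  unfolding in_pow_def using valuation_mult[of x y] by fastforce

lemma in_pow_divide: "in_pow v k x \<Longrightarrow> y \<noteq> 0 \<Longrightarrow> in_pow v (k - v y) (x / y)"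
  using in_pow_mult[of k x "- v y" "inverse y"] valuation_inverse[of y]
  by (simp add: in_pow_def divide_inverse)

lemma in_pow_sum: "(\<And>i. i \<in> A \<Longrightarrow> in_pow v k (f i)) \<Longrightarrow> in_pow v k (sum f A)"
  by (induction A rule: infinite_finite_induct) (auto intro: in_pow_add)

lemma in_pow_power_int: "in_pow v n (w powi n)"
  using uniformizer valuation_power_int[of w n] by (simp add: in_pow_def uniformizer_def)

lemma finite_residues_nat:
  "\<exists>R. finite R \<and> (\<forall>x. in_pow v B x \<longrightarrow> (\<exists>r\<in>R. in_pow v (B + int n) (x - r)))"
proof (induction n)
  case 0
  show ?case by (rule exI[of _ "{0}"]) simp
next
  case (Suc n)
  define K where "K = B + int n"
  obtain R where R: "finite R" "\<And>x. in_pow v B x \<Longrightarrow> \<exists>r\<in>R. in_pow v K (x - r)"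
    using Suc K_def by blast
  obtain R1 where R1: "finite R1" "\<And>y. in_pow v 0 y \<Longrightarrow> \<exists>s\<in>R1. in_pow v 1 (y - s)"
    using nonarch unfolding nonarch_local_field_def by blast
  have "\<exists>r'\<in>(\<lambda>(r, s). r + w powi K * s) ` (R \<times> R1). in_pow v (K + 1) (x - r')"
    if x: "in_pow v B x" for x
  proof -
    obtain r where r: "r \<in> R" "in_pow v K (x - r)" using R(2)[OF x] by blast
    define y where "y = (x - r) * w powi (- K)"
    have "in_pow v (K + - K) y"
      unfolding y_def by (rule in_pow_mult[OF r(2) in_pow_power_int])
    then obtain s where s: "s \<in> R1" "in_pow v 1 (y - s)" using R1(2) by auto
    have "w powi K * w powi (- K) = 1"
      using uniformizer_nonzero by (simp add: power_int_minus)
    then have "x - r = w powi K * y"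
      unfolding y_def by (simp add: mult.left_commute[of "w powi K"])
    then have "x - (r + w powi K * s) = w powi K * (y - s)"
      by (simp add: algebra_simps)
    moreover have "in_pow v (K + 1) (w powi K * (y - s))"
      by (rule in_pow_mult[OF in_pow_power_int s(2)])
    ultimately show ?thesis using r(1) s(1) by force
  qed
  moreover have "finite ((\<lambda>(r, s). r + w powi K * s) ` (R \<times> R1))"
    using R(1) R1(1) by simp
  moreover have "B + int (Suc n) = K + 1" by (simp add: K_def)
  ultimately show ?case by metis
qed

lemma finite_residues: "\<exists>R. finite R \<and> (\<forall>x. in_pow v B x \<longrightarrow> (\<exists>r\<in>R. in_pow v K (x - r)))"
proof -
  obtain R where R: "finite R"
    and approx: "\<And>x. in_pow v B x \<Longrightarrow> \<exists>r\<in>R. in_pow v (B + int (nat (K - B))) (x - r)"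
    using finite_residues_nat by blast
  have "\<exists>r\<in>R. in_pow v K (x - r)" if x: "in_pow v B x" for x
  proof -
    obtain r where r: "r \<in> R" "in_pow v (B + int (nat (K - B))) (x - r)"
      using approx[OF x] by blast
    have "K \<le> B + int (nat (K - B))" by simp
    with r show ?thesis using in_pow_mono by blast
  qed
  then show ?thesis using R by blast
qed

end

section \<open>Unitriangular and diagonal matrices\<close>

lemma index_mult_mat_sum:
  assumes "A \<in> carrier_mat nr n" "B \<in> carrier_mat n nc" "i < nr" "j < nc"
  shows "(A * B) $$ (i, j) = (\<Sum>t<n. A $$ (i, t) * B $$ (t, j))"
  using assms by (simp add: scalar_prod_def atLeast0LessThan)

definition upper_unitriangular :: "nat \<Rightarrow> 'a::{zero,one} mat \<Rightarrow> bool" where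
  "upper_unitriangular n A \<longleftrightarrow>
     (\<forall>i<n. \<forall>j<n. (j < i \<longrightarrow> A $$ (i, j) = 0) \<and> (i = j \<longrightarrow> A $$ (i, j) = 1))"

lemma upper_unitriangular_one: "upper_unitriangular n (1\<^sub>m n)"
  by (simp add: upper_unitriangular_def)

lemma upper_unitriangular_mult_entry:
  fixes A B :: "'a::comm_ring_1 mat"
  assumes A: "A \<in> carrier_mat n n" and B: "B \<in> carrier_mat n n"
    and uA: "upper_unitriangular n A" and i: "i < n" and j: "j < n"
  shows "(A * B) $$ (i, j) = B $$ (i, j) + (\<Sum>t\<in>{Suc i..<n}. A $$ (i, t) * B $$ (t, j))"
proof -
  let ?f = "\<lambda>t. A $$ (i, t) * B $$ (t, j)"
  have "(\<Sum>t<n. ?f t) = (\<Sum>t\<in>{0..<i}. ?f t) + (\<Sum>t\<in>{i..<n}. ?f t)"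
    using i by (simp add: atLeast0LessThan[symmetric] sum.atLeastLessThan_concat)
  also have "(\<Sum>t\<in>{i..<n}. ?f t) = ?f i + (\<Sum>t\<in>{Suc i..<n}. ?f t)"
    using i by (simp add: sum.atLeast_Suc_lessThan)
  also have "(\<Sum>t\<in>{0..<i}. ?f t) = 0"
    using uA i by (intro sum.neutral) (simp add: upper_unitriangular_def)
  finally show ?thesis
    using uA i by (simp add: index_mult_mat_sum[OF A B i j] upper_unitriangular_def)
qed

lemma upper_unitriangular_mult:
  fixes A B :: "'a::comm_ring_1 mat"
  assumes A: "A \<in> carrier_mat n n" and B: "B \<in> carrier_mat n n"
    and uA: "upper_unitriangular n A" and uB: "upper_unitriangular n B"
  shows "upper_unitriangular n (A * B)"
  unfolding upper_unitriangular_def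
proof (intro allI impI)
  fix i j assume i: "i < n" and j: "j < n"
  have "(\<Sum>t\<in>{Suc i..<n}. A $$ (i, t) * B $$ (t, j)) = 0" if "j \<le> i"
    using uB that by (intro sum.neutral) (auto simp: upper_unitriangular_def)
  then have "(A * B) $$ (i, j) = B $$ (i, j)" if "j \<le> i"
    using that by (simp add: upper_unitriangular_mult_entry[OF A B uA i j])
  then show "(j < i \<longrightarrow> (A * B) $$ (i, j) = 0) \<and> (i = j \<longrightarrow> (A * B) $$ (i, j) = 1)"
    using uB i j unfolding upper_unitriangular_def by auto
qed

definition unitriangular_entry :: "('a \<Rightarrow> bool) \<Rightarrow> 'a::{zero,one} mat \<Rightarrow> nat \<Rightarrow> nat \<Rightarrow> bool" where
  "unitriangular_entry P B i j \<longleftrightarrow>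
     (j < i \<longrightarrow> B $$ (i, j) = 0) \<and> (i = j \<longrightarrow> B $$ (i, j) = 1) \<and> (i < j \<longrightarrow> P (B $$ (i, j)))"

lemma unitriangular_entry_inverse_step:
  fixes A B :: "'a::comm_ring_1 mat"
  assumes A: "A \<in> carrier_mat n n" and B: "B \<in> carrier_mat n n"
    and uA: "upper_unitriangular n A" and AB: "A * B = 1\<^sub>m n"
    and PA: "\<And>i j. i < j \<Longrightarrow> j < n \<Longrightarrow> P (A $$ (i, j))"
    and P0: "P 0" and Padd: "\<And>x y. P x \<Longrightarrow> P y \<Longrightarrow> P (x + y)"
    and Puminus: "\<And>x. P x \<Longrightarrow> P (- x)" and Pmult: "\<And>x y. P x \<Longrightarrow> P y \<Longrightarrow> P (x * y)"
    and i: "i < n" and j: "j < n"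
    and below: "\<And>t. i < t \<Longrightarrow> t < n \<Longrightarrow> unitriangular_entry P B t j"
  shows "unitriangular_entry P B i j"
proof -
  let ?S = "\<Sum>t\<in>{Suc i..<n}. A $$ (i, t) * B $$ (t, j)"
  have B_ij: "B $$ (i, j) = 1\<^sub>m n $$ (i, j) - ?S"
    using upper_unitriangular_mult_entry[OF A B uA i j] AB by simp
  have "?S = 0" if "j \<le> i"
    using below that by (intro sum.neutral) (auto simp: unitriangular_entry_def)
  moreover have "P ?S"
  proof -
    have Psum: "P (sum f S)" if "\<And>t. t \<in> S \<Longrightarrow> P (f t)" for f and S :: "nat set"
      using that by (induction S rule: infinite_finite_induct) (auto intro: P0 Padd)
    have "P (A $$ (i, t) * B $$ (t, j))" if t: "i < t" "t < n" for t
      using below[OF t] PA[OF t] P0 Pmult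
      by (cases t j rule: linorder_cases) (simp_all add: unitriangular_entry_def)
    then show ?thesis by (intro Psum) simp
  qed
  ultimately show ?thesis
    using B_ij i j Puminus by (auto simp: unitriangular_entry_def)
qed

lemma upper_unitriangular_inverse:
  fixes A B :: "'a::comm_ring_1 mat"
  assumes A: "A \<in> carrier_mat n n" and B: "B \<in> carrier_mat n n"
    and uA: "upper_unitriangular n A" and AB: "A * B = 1\<^sub>m n"
    and PA: "\<And>i j. i < j \<Longrightarrow> j < n \<Longrightarrow> P (A $$ (i, j))"
    and P0: "P 0" and Padd: "\<And>x y. P x \<Longrightarrow> P y \<Longrightarrow> P (x + y)"
    and Puminus: "\<And>x. P x \<Longrightarrow> P (- x)" and Pmult: "\<And>x y. P x \<Longrightarrow> P y \<Longrightarrow> P (x * y)"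
  shows "upper_unitriangular n B \<and> (\<forall>i j. i < j \<longrightarrow> j < n \<longrightarrow> P (B $$ (i, j)))"
proof -
  have row: "unitriangular_entry P B i j" if "i < n" "j < n" for i j
    using that
  proof (induction "n - i" arbitrary: i rule: less_induct)
    case less
    show ?case
    proof (rule unitriangular_entry_inverse_step[OF A B uA AB PA P0 Padd Puminus Pmult less.prems])
      fix t assume "i < t" "t < n"
      then show "unitriangular_entry P B t j"
        using less.hyps[of t] less.prems diff_less_mono2[of i t n] by blast
    qed
  qed
  have "upper_unitriangular n B"
    using row by (simp add: upper_unitriangular_def unitriangular_entry_def)
  moreover have "P (B $$ (i, j))" if "i < j" "j < n" for i j
    using row[OF less_trans[OF that] that(2)] that(1) by (simp add: unitriangular_entry_def)
  ultimately show ?thesis by blast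
qed

lemma mat_diag_conj_entry:
  fixes A :: "'a::comm_ring_1 mat"
  assumes "A \<in> carrier_mat n n" "i < n" "j < n"
  shows "(mat_diag n d * A * mat_diag n d') $$ (i, j) = d i * A $$ (i, j) * d' j"
  using assms by (subst mat_diag_mult_left[OF assms(1)], subst mat_diag_mult_right[of _ n]) auto

lemma upper_unitriangular_mat_diag_conj:
  fixes A :: "'a::comm_ring_1 mat"
  assumes "A \<in> carrier_mat n n" "upper_unitriangular n A" "\<And>i. i < n \<Longrightarrow> d i * d' i = 1"
  shows "upper_unitriangular n (mat_diag n d * A * mat_diag n d')"
  using assms by (simp add: upper_unitriangular_def mat_diag_conj_entry)

lemma mat_conj_cancel:
  fixes A :: "'a::semiring_1 mat"
  assumes A: "A \<in> carrier_mat n n" and P: "P \<in> carrier_mat n n" and Q: "Q \<in> carrier_mat n n"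
    and QP: "Q * P = 1\<^sub>m n"
  shows "Q * (P * A * Q) * P = A"
proof -
  have "Q * (P * A * Q) * P = (Q * P) * A * (Q * P)"
    using A P Q by (simp add: assoc_mult_mat[of _ n n _ n _ n])
  then show ?thesis using A QP by simp
qed

lemma mat_conj_mult:
  fixes A B :: "'a::semiring_1 mat"
  assumes A: "A \<in> carrier_mat n n" and B: "B \<in> carrier_mat n n"
    and P: "P \<in> carrier_mat n n" and Q: "Q \<in> carrier_mat n n" and PQ: "P * Q = 1\<^sub>m n"
  shows "(Q * A * P) * (Q * B * P) = Q * (A * B) * P"
proof -
  have "(Q * A * P) * (Q * B * P) = Q * A * (P * Q) * B * P"
    using A B P Q by (simp add: assoc_mult_mat[of _ n n _ n _ n])
  then show ?thesis
    using A B Q PQ by (simp add: assoc_mult_mat[of _ n n _ n _ n])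
qed

section \<open>Congruence subgroups\<close>

context local_field
begin

lemma cong_sub_carrier: "A \<in> cong_sub v n k \<Longrightarrow> A \<in> carrier_mat n n"
  by (simp add: cong_sub_def)

lemma cong_sub_entry:
  "A \<in> cong_sub v n k \<Longrightarrow> i < n \<Longrightarrow> j < n \<Longrightarrow> in_pow v k (A $$ (i, j) - 1\<^sub>m n $$ (i, j))"
  by (simp add: cong_sub_def)

lemma one_mem_cong_sub: "1\<^sub>m n \<in> cong_sub v n k"
  by (simp add: cong_sub_def)

lemma cong_sub_antimono: "k \<le> K \<Longrightarrow> cong_sub v n K \<subseteq> cong_sub v n k"
  unfolding cong_sub_def using in_pow_mono by blast

lemma cong_sub_integral:
  assumes "0 \<le> k" "A \<in> cong_sub v n k" "i < n" "j < n"
  shows "in_pow v 0 (A $$ (i, j))"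
proof -
  have "in_pow v 0 (A $$ (i, j) - 1\<^sub>m n $$ (i, j))"
    using assms in_pow_mono cong_sub_entry by blast
  moreover have "in_pow v 0 (1\<^sub>m n $$ (i, j))"
    using assms in_pow_one by simp
  ultimately show ?thesis using in_pow_add by fastforce
qed

lemma in_pow_mult_mat_diff:
  assumes A: "A \<in> carrier_mat n n" and B: "B \<in> cong_sub v n b"
    and A_entries: "\<And>i j. i < n \<Longrightarrow> j < n \<Longrightarrow> in_pow v a (A $$ (i, j))"
    and i: "i < n" and j: "j < n"
  shows "in_pow v (a + b) ((A * B) $$ (i, j) - A $$ (i, j))"
proof -
  have "A $$ (i, j) = (\<Sum>t<n. A $$ (i, t) * 1\<^sub>m n $$ (t, j))"
    using index_mult_mat_sum[OF A one_carrier_mat i j] A i j by simp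
  then have diff: "(A * B) $$ (i, j) - A $$ (i, j) = (\<Sum>t<n. A $$ (i, t) * (B $$ (t, j) - 1\<^sub>m n $$ (t, j)))"
    unfolding index_mult_mat_sum[OF A cong_sub_carrier[OF B] i j]
    by (simp only: sum_subtractf right_diff_distrib)
  have "in_pow v (a + b) (A $$ (i, t) * (B $$ (t, j) - 1\<^sub>m n $$ (t, j)))" if "t < n" for t
    using A_entries[OF i that] cong_sub_entry[OF B that j] by (rule in_pow_mult)
  then show ?thesis
    unfolding diff by (intro in_pow_sum) simp
qed

lemma cong_sub_mult:
  assumes k: "0 \<le> k" and A: "A \<in> cong_sub v n k" and B: "B \<in> cong_sub v n k"
  shows "A * B \<in> cong_sub v n k"
proof -
  have "in_pow v k ((A * B) $$ (i, j) - 1\<^sub>m n $$ (i, j))" if ij: "i < n" "j < n" for i j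
  proof -
    have "in_pow v (0 + k) ((A * B) $$ (i, j) - A $$ (i, j))"
      using cong_sub_carrier[OF A] B cong_sub_integral[OF k A] ij by (rule in_pow_mult_mat_diff)
    then show ?thesis
      using in_pow_add[OF _ cong_sub_entry[OF A ij]] by fastforce
  qed
  then show ?thesis
    using cong_sub_carrier[OF A] cong_sub_carrier[OF B] by (simp add: cong_sub_def)
qed

lemma cong_sub_unitriangular_inverse:
  assumes k: "0 \<le> k" and A: "A \<in> cong_sub v n k" and uA: "upper_unitriangular n A"
    and B: "B \<in> carrier_mat n n" and AB: "A * B = 1\<^sub>m n"
  shows "B \<in> cong_sub v n k \<and> upper_unitriangular n B"
proof -
  have "in_pow v k (A $$ (i, j))" if "i < j" "j < n" for i j
    using cong_sub_entry[OF A, of i j] that by simp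
  moreover have "in_pow v k (x * y)" if "in_pow v k x" "in_pow v k y" for x y
    using in_pow_mult[OF that] in_pow_mono[of k "k + k"] k by simp
  ultimately have "upper_unitriangular n B \<and> (\<forall>i j. i < j \<longrightarrow> j < n \<longrightarrow> in_pow v k (B $$ (i, j)))"
    using upper_unitriangular_inverse[OF cong_sub_carrier[OF A] B uA AB, of "in_pow v k"]
    by (simp add: in_pow_add in_pow_uminus)
  then have "in_pow v k (B $$ (i, j) - 1\<^sub>m n $$ (i, j))" if "i < n" "j < n" for i j
    using that by (cases i j rule: linorder_cases) (simp_all add: upper_unitriangular_def)
  with B \<open>upper_unitriangular n B \<and> _\<close> show ?thesis by (simp add: cong_sub_def)
qed

end

section \<open>Matrix groups and \<open>SO\<^sub>2\<^sub>l\<close>\<close>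

definition mat_group :: "nat \<Rightarrow> 'a::semiring_1 mat set \<Rightarrow> 'a mat monoid" where
  "mat_group n S = \<lparr>carrier = S, mult = (*), one = 1\<^sub>m n\<rparr>"

lemma mat_group_simps [simp]:
  "carrier (mat_group n S) = S" "mult (mat_group n S) = (*)" "one (mat_group n S) = 1\<^sub>m n"
  by (simp_all add: mat_group_def)

lemma group_mat_group:
  assumes S: "S \<subseteq> carrier_mat n n" and one: "1\<^sub>m n \<in> S"
    and mult: "\<And>A B. A \<in> S \<Longrightarrow> B \<in> S \<Longrightarrow> A * B \<in> S"
    and inverse: "\<And>A. A \<in> S \<Longrightarrow> \<exists>B\<in>S. B * A = 1\<^sub>m n"
  shows "group (mat_group n S)"
proof (rule groupI)
  fix x y z assume "x \<in> carrier (mat_group n S)" "y \<in> carrier (mat_group n S)"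
    "z \<in> carrier (mat_group n S)"
  then have "x \<in> carrier_mat n n" "y \<in> carrier_mat n n" "z \<in> carrier_mat n n"
    using S by auto
  then show "x \<otimes>\<^bsub>mat_group n S\<^esub> y \<otimes>\<^bsub>mat_group n S\<^esub> z
      = x \<otimes>\<^bsub>mat_group n S\<^esub> (y \<otimes>\<^bsub>mat_group n S\<^esub> z)"
    by simp
next
  fix x assume "x \<in> carrier (mat_group n S)"
  then have "x \<in> carrier_mat n n" using S by auto
  then show "\<one>\<^bsub>mat_group n S\<^esub> \<otimes>\<^bsub>mat_group n S\<^esub> x = x" by simp
qed (use one mult inverse in auto)

lemma SO_carrier: "g \<in> SO l \<rho> \<Longrightarrow> g \<in> carrier_mat (2*l) (2*l)"
  by (simp add: SO_def)

lemma Jrho_carrier: "Jrho l \<rho> \<in> carrier_mat (2*l) (2*l)"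
  unfolding Jrho_def by (rule mult_carrier_mat) (auto simp: Jmat_def)

lemma one_mem_SO: "1\<^sub>m (2*l) \<in> SO l \<rho>"
  using Jrho_carrier[of l \<rho>] by (simp add: SO_def)

lemma transpose_mult_form_mult:
  fixes g h :: "'a::comm_ring_1 mat"
  assumes "g \<in> carrier_mat n n" "h \<in> carrier_mat n n" "J \<in> carrier_mat n n"
  shows "transpose_mat (g * h) * J * (g * h) = transpose_mat h * (transpose_mat g * J * g) * h"
  using assms by (simp add: transpose_mult assoc_mult_mat[of _ n n _ n _ n])

lemma SO_mult:
  assumes g: "g \<in> SO l \<rho>" and h: "h \<in> SO l \<rho>"
  shows "g * h \<in> SO l \<rho>"
  using g h SO_carrier[OF g] SO_carrier[OF h]
  by (simp add: SO_def det_mult transpose_mult_form_mult[OF _ _ Jrho_carrier])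

lemma SO_right_inverse:
  assumes g: "g \<in> SO l \<rho>" and g': "g' \<in> carrier_mat (2*l) (2*l)" and gg': "g * g' = 1\<^sub>m (2*l)"
  shows "g' \<in> SO l \<rho>"
proof -
  have gc: "g \<in> carrier_mat (2*l) (2*l)" and det: "det g = 1"
    and form: "transpose_mat g * Jrho l \<rho> * g = Jrho l \<rho>"
    using g by (auto simp: SO_def)
  have "det g' = 1" using det_mult[OF gc g'] gg' det by simp
  moreover have "transpose_mat g' * Jrho l \<rho> * g' = Jrho l \<rho>"
    using transpose_mult_form_mult[OF gc g' Jrho_carrier[of l \<rho>]] form gg' Jrho_carrier[of l \<rho>]
    by simp
  ultimately show ?thesis using g' by (simp add: SO_def)
qed

lemma SO_inverse:
  assumes g: "g \<in> SO l \<rho>"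
  obtains g' where "g' \<in> SO l \<rho>" "g * g' = 1\<^sub>m (2*l)" "g' * g = 1\<^sub>m (2*l)"
proof -
  have gc: "g \<in> carrier_mat (2*l) (2*l)" using SO_carrier[OF g] .
  have "g \<in> Units (ring_mat TYPE('a) (2*l) ())"
    using det_non_zero_imp_unit[OF gc] g by (simp add: SO_def)
  then obtain g' where "g' \<in> carrier_mat (2*l) (2*l)" "g' * g = 1\<^sub>m (2*l)" "g * g' = 1\<^sub>m (2*l)"
    unfolding Units_def ring_mat_simps by auto
  with g that show ?thesis using SO_right_inverse by blast
qed

lemma Kcong_eq: "Kcong v l \<rho> m = SO l \<rho> \<inter> cong_sub v (2*l) m"
  by (auto simp: Kcong_def cong_sub_def dest: SO_carrier)

lemma Uunip_iff: "u \<in> Uunip l \<rho> \<longleftrightarrow> u \<in> SO l \<rho> \<and> upper_unitriangular (2*l) u"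
  by (simp add: Uunip_def upper_unitriangular_def)

section \<open>The conjugated groups \<open>U\<^sub>m\<close>\<close>

definition emat_exponent :: "nat \<Rightarrow> int \<Rightarrow> nat \<Rightarrow> int" where
  "emat_exponent l m i = (if i < l then - (2*m*(int l - 1 - int i)) else 2*m*(int i - int l))"

lemma emat_eq_mat_diag: "emat w l m = mat_diag (2*l) (\<lambda>i. w powi emat_exponent l m i)"
  unfolding emat_def mat_diag_def emat_exponent_def by (rule eq_matI) auto

lemma emat_carrier: "emat w l m \<in> carrier_mat (2*l) (2*l)"
  by (simp add: emat_def)

lemma emat_exponent_uminus [simp]: "emat_exponent l (- m) i = - emat_exponent l m i"
  by (simp add: emat_exponent_def)

lemma abs_emat_exponent_le:
  assumes "i < 2*l" "0 \<le> m"
  shows "\<bar>emat_exponent l m i\<bar> \<le> 2*m*int l"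
  using assms mult_left_mono[of "int l - 1 - int i" "int l" "2*m"]
    mult_left_mono[of "int i - int l" "int l" "2*m"]
  by (auto simp: emat_exponent_def)

lemma emat_conj_entry:
  fixes w :: "'a::field"
  assumes "A \<in> carrier_mat (2*l) (2*l)" "i < 2*l" "j < 2*l"
  shows "(emat w l m * A * emat w l (- m)) $$ (i, j)
    = w powi emat_exponent l m i * A $$ (i, j) * w powi (- emat_exponent l m j)"
  using assms by (simp add: emat_eq_mat_diag mat_diag_conj_entry)

lemma upper_unitriangular_emat_conj:
  fixes w :: "'a::field"
  assumes "w \<noteq> 0" "A \<in> carrier_mat (2*l) (2*l)" "upper_unitriangular (2*l) A"
  shows "upper_unitriangular (2*l) (emat w l m * A * emat w l (- m))"
  unfolding emat_eq_mat_diag using assms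
  by (intro upper_unitriangular_mat_diag_conj) (simp_all add: power_int_minus)

context local_field
begin

lemma emat_inverse [simp]:
  "emat w l m * emat w l (- m) = 1\<^sub>m (2*l)" "emat w l (- m) * emat w l m = 1\<^sub>m (2*l)"
  using uniformizer_nonzero by (simp_all add: emat_eq_mat_diag power_int_minus)

lemma Um_iff: "u \<in> Um v w l \<rho> m \<longleftrightarrow> u \<in> SO l \<rho> \<and> upper_unitriangular (2*l) u
    \<and> (\<exists>h\<in>Kcong v l \<rho> m. u = emat w l m * h * emat w l (- m))"
  by (auto simp: Um_def Hm_def Uunip_iff)

lemma Um_carrier: "u \<in> Um v w l \<rho> m \<Longrightarrow> u \<in> carrier_mat (2*l) (2*l)"
  using SO_carrier by (auto simp: Um_iff)

lemma one_mem_Um: "1\<^sub>m (2*l) \<in> Um v w l \<rho> m"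
proof -
  have "1\<^sub>m (2*l) \<in> Kcong v l \<rho> m"
    by (simp add: Kcong_eq one_mem_SO one_mem_cong_sub)
  moreover have "1\<^sub>m (2*l) = emat w l m * 1\<^sub>m (2*l) * emat w l (- m)"
    using emat_carrier[of w l m] by simp
  ultimately show ?thesis
    by (auto simp: Um_iff one_mem_SO upper_unitriangular_one)
qed

lemma Um_mult:
  assumes m: "0 \<le> m" and u1: "u1 \<in> Um v w l \<rho> m" and u2: "u2 \<in> Um v w l \<rho> m"
  shows "u1 * u2 \<in> Um v w l \<rho> m"
proof -
  obtain h1 h2 where h: "h1 \<in> Kcong v l \<rho> m" "h2 \<in> Kcong v l \<rho> m"
    and u: "u1 = emat w l m * h1 * emat w l (- m)" "u2 = emat w l m * h2 * emat w l (- m)"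
    using u1 u2 by (auto simp: Um_iff)
  have "u1 * u2 = emat w l m * (h1 * h2) * emat w l (- m)"
    unfolding u using h SO_carrier emat_carrier by (intro mat_conj_mult) (auto simp: Kcong_eq)
  moreover have "h1 * h2 \<in> Kcong v l \<rho> m"
    using h by (auto simp: Kcong_eq intro: SO_mult cong_sub_mult[OF m])
  moreover have "u1 * u2 \<in> SO l \<rho>"
    using SO_mult[of u1 l \<rho> u2] u1 u2 by (simp add: Um_iff)
  moreover have "upper_unitriangular (2*l) (u1 * u2)"
    using upper_unitriangular_mult[OF Um_carrier[OF u1] Um_carrier[OF u2]] u1 u2 by (simp add: Um_iff)
  ultimately show ?thesis unfolding Um_iff by blast
qed

lemma Um_inverse:
  assumes m: "0 \<le> m" and u: "u \<in> Um v w l \<rho> m"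
  obtains u' where "u' \<in> Um v w l \<rho> m" "u' * u = 1\<^sub>m (2*l)"
proof -
  let ?e = "emat w l m" and ?e' = "emat w l (- m)"
  obtain h where h: "h \<in> Kcong v l \<rho> m" and u_eq: "u = ?e * h * ?e'"
    using u by (auto simp: Um_iff)
  have hS: "h \<in> SO l \<rho>" and hc: "h \<in> carrier_mat (2*l) (2*l)"
    using h SO_carrier by (auto simp: Kcong_eq)
  have "h = ?e' * u * ?e"
    unfolding u_eq by (rule mat_conj_cancel[symmetric]) (simp_all add: hc emat_carrier)
  then have uh: "upper_unitriangular (2*l) h"
    using upper_unitriangular_emat_conj[OF uniformizer_nonzero Um_carrier[OF u], of "- m"] u
    by (simp add: Um_iff)
  obtain h' where h'S: "h' \<in> SO l \<rho>" and hh': "h * h' = 1\<^sub>m (2*l)"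
    using SO_inverse[OF hS] by blast
  have h'c: "h' \<in> carrier_mat (2*l) (2*l)" using SO_carrier[OF h'S] .
  have "h' \<in> cong_sub v (2*l) m \<and> upper_unitriangular (2*l) h'"
    using h uh h'c hh' by (intro cong_sub_unitriangular_inverse[OF m]) (auto simp: Kcong_eq)
  then have h'K: "h' \<in> Kcong v l \<rho> m" and uh': "upper_unitriangular (2*l) h'"
    using h'S by (auto simp: Kcong_eq)
  define u' where "u' = ?e * h' * ?e'"
  have u'c: "u' \<in> carrier_mat (2*l) (2*l)"
    unfolding u'_def by (intro mult_carrier_mat[of _ "2*l" "2*l"] h'c emat_carrier)
  have "u * u' = ?e * (h * h') * ?e'"
    unfolding u_eq u'_def by (rule mat_conj_mult[OF hc h'c emat_carrier emat_carrier]) simp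
  then have uu': "u * u' = 1\<^sub>m (2*l)"
    using hh' emat_carrier[of w l m] by simp
  have "u' \<in> Um v w l \<rho> m"
    using SO_right_inverse[OF _ u'c uu'] u h'K
      upper_unitriangular_emat_conj[OF uniformizer_nonzero h'c uh']
    by (auto simp: Um_iff u'_def)
  moreover have "u' * u = 1\<^sub>m (2*l)"
    using mat_mult_left_right_inverse[OF Um_carrier[OF u] u'c uu'] .
  ultimately show ?thesis using that by blast
qed

lemma group_Um: "0 \<le> m \<Longrightarrow> group (mat_group (2*l) (Um v w l \<rho> m))"
  by (rule group_mat_group) (auto intro: Um_carrier one_mem_Um Um_mult elim: Um_inverse)

lemma Um_entry_bound:
  assumes m: "0 \<le> m" and u: "u \<in> Um v w l \<rho> m" and i: "i < 2*l" and j: "j < 2*l"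
  shows "in_pow v (- (4*m*int l)) (u $$ (i, j))"
proof -
  obtain h where h: "h \<in> Kcong v l \<rho> m" and u_eq: "u = emat w l m * h * emat w l (- m)"
    using u by (auto simp: Um_iff)
  have hK: "h \<in> cong_sub v (2*l) m" using h by (simp add: Kcong_eq)
  note hc = cong_sub_carrier[OF hK]
  have "in_pow v (emat_exponent l m i + 0 + - emat_exponent l m j) (u $$ (i, j))"
    unfolding u_eq emat_conj_entry[OF hc i j]
    by (intro in_pow_mult in_pow_power_int cong_sub_integral[OF m hK i j])
  moreover have "- (4*m*int l) \<le> emat_exponent l m i + 0 + - emat_exponent l m j"
    using abs_emat_exponent_le[OF i m] abs_emat_exponent_le[OF j m] by linarith
  ultimately show ?thesis using in_pow_mono by blast
qed

end

section \<open>Averages over left cosets\<close>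

\<comment> \<open>free the ASCII syntax \<open><#\<close> of multiset inclusion for left cosets\<close>
no_notation (ASCII) subset_mset (infix \<open><#\<close> 50)

definition lcoset_avg :: "('a, 'b) monoid_scheme \<Rightarrow> 'a set \<Rightarrow> ('a \<Rightarrow> 'c::field_char_0) \<Rightarrow> 'c" where
  "lcoset_avg G N f =
     (\<Sum>C\<in>lcosets\<^bsub>G\<^esub> N. f (SOME x. x \<in> C)) / of_nat (card (lcosets\<^bsub>G\<^esub> N))"

context group
begin

lemma l_coset_mono: "A \<subseteq> B \<Longrightarrow> x <# A \<subseteq> x <# B"
  by (auto simp: l_coset_def)

lemma l_coset_inv_cancel:
  assumes "D \<subseteq> carrier G" "u \<in> carrier G"
  shows "inv u <# (u <# D) = D" "u <# (inv u <# D) = D"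
  using assms by (simp_all add: lcos_m_assoc lcos_mult_one)

lemma l_coset_in_lcosets:
  assumes "H \<subseteq> carrier G" "x \<in> carrier G" "D \<in> lcosets H"
  shows "x <# D \<in> lcosets H"
  using assms by (auto simp: LCOSETS_def lcos_m_assoc)

lemma lcoset_some_mem:
  assumes "subgroup N G" "C \<in> lcosets N"
  shows "(SOME x. x \<in> C) \<in> C"
proof -
  obtain a where "a \<in> carrier G" "C = a <# N"
    using assms(2) by (auto simp: LCOSETS_def)
  then have "a \<in> C" using lcos_self[OF _ assms(1)] by simp
  then show ?thesis by (rule someI)
qed

lemma lcoset_of_subcoset:
  assumes N: "subgroup N G" and N': "subgroup N' G" and sub: "N' \<subseteq> N"
    and C': "C' \<in> lcosets N'" and C: "C \<in> lcosets N"
  shows "(SOME x. x \<in> C') <# N = C \<longleftrightarrow> C' \<subseteq> C"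
proof -
  obtain a where a: "a \<in> carrier G" and C'_eq: "C' = a <# N'"
    using C' by (auto simp: LCOSETS_def)
  obtain u where u: "u \<in> carrier G" and C_eq: "C = u <# N"
    using C by (auto simp: LCOSETS_def)
  have aN: "a <# N' \<subseteq> a <# N" using sub by (rule l_coset_mono)
  have "(SOME x. x \<in> C') <# N = a <# N"
    using l_repr_independence[OF _ a N] lcoset_some_mem[OF N' C'] aN C'_eq by auto
  moreover have "a <# N = C \<longleftrightarrow> C' \<subseteq> C"
  proof
    assume "C' \<subseteq> C"
    then have "a \<in> u <# N" using lcos_self[OF a N'] C'_eq C_eq by auto
    then show "a <# N = C" using l_repr_independence[OF _ u N] C_eq by simp
  qed (use aN C'_eq in auto)
  ultimately show ?thesis by simp
qed

lemma card_lcosets_within: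
  assumes N: "subgroup N G" and N': "subgroup N' G" and u: "u \<in> carrier G"
  shows "card {C' \<in> lcosets N'. C' \<subseteq> u <# N} = card {C' \<in> lcosets N'. C' \<subseteq> N}"
proof -
  have NG: "N \<subseteq> carrier G" and N'G: "N' \<subseteq> carrier G"
    using N N' subgroup.subset by auto
  have carrier: "D \<subseteq> carrier G" if "D \<in> lcosets N'" for D
    using that N'G l_coset_subset_G by (auto simp: LCOSETS_def)
  have "bij_betw (\<lambda>D. u <# D) {C' \<in> lcosets N'. C' \<subseteq> N} {C' \<in> lcosets N'. C' \<subseteq> u <# N}"
  proof (rule bij_betw_byWitness[where f' = "\<lambda>D. inv u <# D"])
    show "(\<lambda>D. u <# D) ` {C' \<in> lcosets N'. C' \<subseteq> N} \<subseteq> {C' \<in> lcosets N'. C' \<subseteq> u <# N}"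
      using l_coset_in_lcosets[OF N'G u] l_coset_mono[of _ N u] by blast
    show "(\<lambda>D. inv u <# D) ` {C' \<in> lcosets N'. C' \<subseteq> u <# N} \<subseteq> {C' \<in> lcosets N'. C' \<subseteq> N}"
      using l_coset_in_lcosets[OF N'G inv_closed[OF u]] l_coset_mono[of _ "u <# N" "inv u"]
        l_coset_inv_cancel(1)[OF NG u] by auto
  qed (use carrier l_coset_inv_cancel u in auto)
  then show ?thesis by (simp add: bij_betw_same_card)
qed

lemma lcoset_some_carrier: "subgroup N G \<Longrightarrow> C \<in> lcosets N \<Longrightarrow> (SOME x. x \<in> C) \<in> carrier G"
  using lcoset_some_mem subgroup.lcosets_carrier[OF _ is_group] by blast

lemma lcosets_project:
  assumes "subgroup N G" "subgroup N' G"
  shows "(\<lambda>C'. (SOME x. x \<in> C') <# N) ` (lcosets N') \<subseteq> lcosets N"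
  using lcoset_some_carrier[OF assms(2)] by (auto simp: LCOSETS_def)

lemma card_lcosets_fibre:
  assumes N: "subgroup N G" and N': "subgroup N' G" and sub: "N' \<subseteq> N" and C: "C \<in> lcosets N"
  shows "card {C' \<in> lcosets N'. (SOME x. x \<in> C') <# N = C} = card {C' \<in> lcosets N'. C' \<subseteq> N}"
proof -
  obtain u where u: "u \<in> carrier G" and C_eq: "C = u <# N"
    using C by (auto simp: LCOSETS_def)
  have "{C' \<in> lcosets N'. (SOME x. x \<in> C') <# N = C} = {C' \<in> lcosets N'. C' \<subseteq> C}"
    using lcoset_of_subcoset[OF N N' sub _ C] by blast
  then show ?thesis
    unfolding C_eq using card_lcosets_within[OF N N' u] by simp
qed

text \<open>Every coset of \<open>N\<close> splits into the same number of cosets of \<open>N'\<close>.\<close>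

lemma lcoset_avg_refine:
  fixes f :: "'a \<Rightarrow> 'c::field_char_0"
  assumes N: "subgroup N G" and N': "subgroup N' G" and sub: "N' \<subseteq> N"
    and fin: "finite (lcosets N)" and fin': "finite (lcosets N')"
    and inv: "\<And>x y. x \<in> carrier G \<Longrightarrow> y \<in> N \<Longrightarrow> f (x \<otimes> y) = f x"
  shows "lcoset_avg G N' f = lcoset_avg G N f"
proof -
  let ?rep = "\<lambda>C. SOME x. x \<in> C"
  let ?p = "\<lambda>C'. ?rep C' <# N"
  define d where "d = card {C' \<in> lcosets N'. C' \<subseteq> N}"
  note fibre = card_lcosets_fibre[OF N N' sub, folded d_def]
  note project = lcosets_project[OF N N']
  have const: "f (?rep C') = f (?rep C)" if "C' \<in> lcosets N'" "?p C' = C" for C' C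
  proof -
    have "?rep C \<in> ?rep C' <# N"
      using lcoset_some_mem[OF N] project that by blast
    then obtain y where "y \<in> N" "?rep C = ?rep C' \<otimes> y" by (auto simp: l_coset_def)
    then show ?thesis using inv lcoset_some_carrier[OF N' that(1)] by simp
  qed
  have "N' \<in> lcosets N'"
    using lcos_mult_one[OF subgroup.subset[OF N']] by (force simp: LCOSETS_def)
  then have "d > 0"
    using sub fin' unfolding d_def by (subst card_gt_0_iff) auto
  have "(\<Sum>C'\<in>lcosets N'. f (?rep C')) = (\<Sum>C\<in>lcosets N. \<Sum>C'\<in>{C' \<in> lcosets N'. ?p C' = C}. f (?rep C'))"
    using sum.group[OF fin' fin project, of "\<lambda>C'. f (?rep C')"] by simp
  also have "\<dots> = (\<Sum>C\<in>lcosets N. of_nat d * f (?rep C))"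
    using const fibre by (intro sum.cong) auto
  finally have sums: "(\<Sum>C'\<in>lcosets N'. f (?rep C')) = of_nat d * (\<Sum>C\<in>lcosets N. f (?rep C))"
    by (simp add: sum_distrib_left)
  have "card (lcosets N') = (\<Sum>C\<in>lcosets N. card {C' \<in> lcosets N'. ?p C' = C})"
    using sum.group[OF fin' fin project, of "\<lambda>_. 1::nat"] by simp
  then have "card (lcosets N') = d * card (lcosets N)"
    using fibre by simp
  with sums \<open>d > 0\<close> show ?thesis by (simp add: lcoset_avg_def)
qed

end

lemma l_coset_mat_group: "u <#\<^bsub>mat_group n S\<^esub> N = (\<lambda>y. u * y) ` N"
  by (auto simp: l_coset_def)

lemma lcosets_mat_group: "lcosets\<^bsub>mat_group n S\<^esub> N = (\<lambda>u. (\<lambda>y. u * y) ` N) ` S"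
  by (auto simp: LCOSETS_def l_coset_mat_group)

lemma finite_image_factor:
  assumes "finite (g ` A)" and "\<And>x y. x \<in> A \<Longrightarrow> y \<in> A \<Longrightarrow> g x = g y \<Longrightarrow> f x = f y"
  shows "finite (f ` A)"
proof -
  have "f ` A \<subseteq> (\<lambda>z. f (inv_into A g z)) ` g ` A"
  proof
    fix y assume "y \<in> f ` A"
    then obtain x where x: "x \<in> A" "y = f x" by blast
    have "inv_into A g (g x) \<in> A" "g (inv_into A g (g x)) = g x"
      using x(1) by (simp_all add: inv_into_into f_inv_into_f)
    then have "y = f (inv_into A g (g x))" using assms(2) x by metis
    then show "y \<in> (\<lambda>z. f (inv_into A g z)) ` g ` A" using x(1) by blast
  qed
  then show ?thesis using assms(1) finite_subset by blast
qed

context local_field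
begin

lemma haar_avg_eq_lcoset_avg:
  assumes G: "group (mat_group n S)"
    and sub: "\<And>k. 1 \<le> k \<Longrightarrow> subgroup (S \<inter> cong_sub v n k) (mat_group n S)"
    and fin: "\<And>k. 1 \<le> k \<Longrightarrow> finite (lcosets\<^bsub>mat_group n S\<^esub> (S \<inter> cong_sub v n k))"
    and k0: "1 \<le> k0" and inv: "\<forall>x\<in>S. \<forall>y\<in>S \<inter> cong_sub v n k0. f (x * y) = f x"
  shows "haar_avg v n S f = lcoset_avg (mat_group n S) (S \<inter> cong_sub v n k0) f"
proof -
  let ?G = "mat_group n S" and ?N = "\<lambda>k. S \<inter> cong_sub v n k"
  have refine: "lcoset_avg ?G (?N K) f = lcoset_avg ?G (?N k) f"
    if k: "1 \<le> k" and K: "k \<le> K" and inv_k: "\<forall>x\<in>S. \<forall>y\<in>?N k. f (x * y) = f x" for k K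
  proof (rule group.lcoset_avg_refine[OF G sub[OF k] sub[OF order.trans[OF k K]]
        _ fin[OF k] fin[OF order.trans[OF k K]]])
    show "?N K \<subseteq> ?N k" using cong_sub_antimono[OF K] by blast
  qed (use k K inv_k in auto)
  have level: "(let N = ?N k; Cs = (\<lambda>u. (\<lambda>y. u * y) ` N) ` S in
       finite Cs \<and> (\<forall>x\<in>S. \<forall>y\<in>N. f (x * y) = f x) \<and>
       c = (\<Sum>C\<in>Cs. f (SOME x. x \<in> C)) / of_nat (card Cs))
    \<longleftrightarrow> (\<forall>x\<in>S. \<forall>y\<in>?N k. f (x * y) = f x) \<and> c = lcoset_avg ?G (?N k) f"
    if "1 \<le> k" for k c
    using fin[OF that] by (simp add: Let_def lcoset_avg_def lcosets_mat_group)
  show ?thesis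
    unfolding haar_avg_def
  proof (rule the_equality)
    fix c
    assume "\<exists>k\<ge>1. let N = ?N k; Cs = (\<lambda>u. (\<lambda>y. u * y) ` N) ` S in
       finite Cs \<and> (\<forall>x\<in>S. \<forall>y\<in>N. f (x * y) = f x) \<and>
       c = (\<Sum>C\<in>Cs. f (SOME x. x \<in> C)) / of_nat (card Cs)"
    then obtain k where k: "1 \<le> k" and inv_k: "\<forall>x\<in>S. \<forall>y\<in>?N k. f (x * y) = f x"
      and c: "c = lcoset_avg ?G (?N k) f"
      using level by blast
    show "c = lcoset_avg ?G (?N k0) f"
      using refine[OF k _ inv_k, of "max k k0"] refine[OF k0 _ inv, of "max k k0"] c by simp
  qed (use level[OF k0] k0 inv in blast)
qed

lemma Um_cong_subgroup:
  assumes m: "0 \<le> m" and k: "0 \<le> k"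
  shows "subgroup (Um v w l \<rho> m \<inter> cong_sub v (2*l) k) (mat_group (2*l) (Um v w l \<rho> m))"
proof -
  interpret U: group "mat_group (2*l) (Um v w l \<rho> m)" by (rule group_Um[OF m])
  show ?thesis
  proof (rule U.subgroupI)
    show "Um v w l \<rho> m \<inter> cong_sub v (2*l) k \<noteq> {}"
      using one_mem_Um one_mem_cong_sub by blast
  next
    fix a assume a: "a \<in> Um v w l \<rho> m \<inter> cong_sub v (2*l) k"
    let ?a' = "inv\<^bsub>mat_group (2*l) (Um v w l \<rho> m)\<^esub> a"
    have a'U: "?a' \<in> Um v w l \<rho> m" using U.inv_closed a by simp
    have "a * ?a' = 1\<^sub>m (2*l)" using U.r_inv a by simp
    then have "?a' \<in> cong_sub v (2*l) k \<and> upper_unitriangular (2*l) ?a'"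
      using a by (intro cong_sub_unitriangular_inverse[OF k _ _ Um_carrier[OF a'U]]) (auto simp: Um_iff)
    then show "?a' \<in> Um v w l \<rho> m \<inter> cong_sub v (2*l) k" using a'U by simp
  next
    fix a b assume "a \<in> Um v w l \<rho> m \<inter> cong_sub v (2*l) k" "b \<in> Um v w l \<rho> m \<inter> cong_sub v (2*l) k"
    then show "a \<otimes>\<^bsub>mat_group (2*l) (Um v w l \<rho> m)\<^esub> b \<in> Um v w l \<rho> m \<inter> cong_sub v (2*l) k"
      using Um_mult[OF m] cong_sub_mult[OF k] by simp
  qed auto
qed

lemma Um_mem_lcoset_if_close:
  assumes m: "0 \<le> m" and u: "u \<in> Um v w l \<rho> m" and u': "u' \<in> Um v w l \<rho> m"
    and close: "\<And>i j. i < 2*l \<Longrightarrow> j < 2*l \<Longrightarrow> in_pow v (k + 4*m*int l) (u' $$ (i, j) - u $$ (i, j))"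
  shows "u' \<in> (\<lambda>y. u * y) ` (Um v w l \<rho> m \<inter> cong_sub v (2*l) k)"
proof -
  obtain a where aU: "a \<in> Um v w l \<rho> m" and au: "a * u = 1\<^sub>m (2*l)"
    using Um_inverse[OF m u] by blast
  note carriers = Um_carrier[OF u] Um_carrier[OF u'] Um_carrier[OF aU]
  have "in_pow v k ((a * u') $$ (i, j) - 1\<^sub>m (2*l) $$ (i, j))" if ij: "i < 2*l" "j < 2*l" for i j
  proof -
    have "(a * u') $$ (i, j) - 1\<^sub>m (2*l) $$ (i, j) = (a * u') $$ (i, j) - (a * u) $$ (i, j)"
      using au by simp
    also have "\<dots> = (\<Sum>t<2*l. a $$ (i, t) * u' $$ (t, j)) - (\<Sum>t<2*l. a $$ (i, t) * u $$ (t, j))"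
      by (simp only: index_mult_mat_sum[OF carriers(3) carriers(2) ij]
          index_mult_mat_sum[OF carriers(3) carriers(1) ij])
    also have "\<dots> = (\<Sum>t<2*l. a $$ (i, t) * (u' $$ (t, j) - u $$ (t, j)))"
      by (simp add: sum_subtractf right_diff_distrib)
    finally have diff: "(a * u') $$ (i, j) - 1\<^sub>m (2*l) $$ (i, j) = \<dots>" .
    have "in_pow v (- (4*m*int l) + (k + 4*m*int l)) (a $$ (i, t) * (u' $$ (t, j) - u $$ (t, j)))"
      if "t < 2*l" for t
      using Um_entry_bound[OF m aU ij(1) that] close[OF that ij(2)] by (rule in_pow_mult)
    then show ?thesis unfolding diff by (intro in_pow_sum) simp
  qed
  then have "a * u' \<in> Um v w l \<rho> m \<inter> cong_sub v (2*l) k"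
    using Um_mult[OF m aU u'] carriers by (simp add: cong_sub_def)
  moreover have "u * (a * u') = u'"
    using mat_mult_left_right_inverse[OF carriers(3) carriers(1) au] carriers
    by (simp add: assoc_mult_mat[of _ "2*l" "2*l" _ "2*l" _ "2*l", symmetric])
  ultimately show ?thesis by (metis image_eqI)
qed

text \<open>The entries of \<open>U\<^sub>m\<close> have bounded valuation, so their residues modulo
  \<open>p\<^sup>k\<^sup>+\<^sup>4\<^sup>m\<^sup>l\<close> range over a finite set, and these residues determine the coset.\<close>

lemma finite_lcosets_Um:
  assumes m: "0 \<le> m" and k: "0 \<le> k"
  shows "finite (lcosets\<^bsub>mat_group (2*l) (Um v w l \<rho> m)\<^esub> (Um v w l \<rho> m \<inter> cong_sub v (2*l) k))"
proof -
  let ?U = "Um v w l \<rho> m" and ?N = "Um v w l \<rho> m \<inter> cong_sub v (2*l) k"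
  define B where "B = 4*m*int l"
  obtain R where R: "finite R"
    and approx: "\<And>x. in_pow v (- B) x \<Longrightarrow> \<exists>r\<in>R. in_pow v (k + B) (x - r)"
    using finite_residues by blast
  define I where "I = {..<2*l} \<times> {..<2*l}"
  define digits where "digits u = restrict (\<lambda>(i, j). SOME r. r \<in> R \<and> in_pow v (k + B) (u $$ (i, j) - r)) I"
    for u :: "'f mat"
  have digits: "digits u (i, j) \<in> R \<and> in_pow v (k + B) (u $$ (i, j) - digits u (i, j))"
    if "u \<in> ?U" "i < 2*l" "j < 2*l" for u i j
    using someI_ex[OF approx[OF Um_entry_bound[OF m that, folded B_def], unfolded Bex_def]] that
    by (simp add: digits_def I_def)
  have "digits ` ?U \<subseteq> PiE I (\<lambda>_. R)"
    using digits by (force simp: digits_def I_def)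
  then have "finite (digits ` ?U)"
    by (rule finite_subset) (simp add: I_def R finite_PiE)
  moreover have "(\<lambda>u. (\<lambda>y. u * y) ` ?N) u = (\<lambda>u. (\<lambda>y. u * y) ` ?N) u'"
    if u: "u \<in> ?U" and u': "u' \<in> ?U" and eq: "digits u = digits u'" for u u'
  proof -
    interpret U: group "mat_group (2*l) ?U" by (rule group_Um[OF m])
    have "in_pow v (k + B) (u' $$ (i, j) - u $$ (i, j))" if "i < 2*l" "j < 2*l" for i j
      using in_pow_diff[OF conjunct2[OF digits[OF u' that]] conjunct2[OF digits[OF u that]]] eq
      by (simp add: algebra_simps)
    then have "u' \<in> u <#\<^bsub>mat_group (2*l) ?U\<^esub> ?N"
      using Um_mem_lcoset_if_close[OF m u u'] by (simp add: B_def l_coset_mat_group)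
    then show ?thesis
      using U.l_repr_independence[OF _ _ Um_cong_subgroup[OF m k]] u by (simp add: l_coset_mat_group)
  qed
  ultimately show ?thesis
    unfolding lcosets_mat_group by (rule finite_image_factor)
qed

end

section \<open>Smoothness of \<open>\<psi>\<^sub>m\<close> on \<open>U\<^sub>m\<close>\<close>

definition generic_coord :: "nat \<Rightarrow> 'a::field mat \<Rightarrow> 'a" where
  "generic_coord l M = (\<Sum>i<l-2. M $$ (i, i+1)) + M $$ (l-2, l) / 2"

lemma psim_eq_generic_coord:
  "psim \<psi> w l m h = \<psi> (w powi (-2*m) * generic_coord l (emat w l (- m) * h * emat w l m))"
  by (simp add: psim_def tau_def generic_coord_def)

lemma generic_coord_diff:
  assumes "2 \<le> l" "A \<in> carrier_mat (2*l) (2*l)" "B \<in> carrier_mat (2*l) (2*l)"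
  shows "generic_coord l (A - B) = generic_coord l A - generic_coord l B"
  using assms by (simp add: generic_coord_def sum_subtractf diff_divide_distrib)

context local_field
begin

lemma valuation_two_nonneg: "0 \<le> v 2"
  using valuation_add[of 1 1] valuation_one by simp

lemma in_pow_generic_coord:
  assumes "2 \<le> l" and M: "\<And>i j. i < 2*l \<Longrightarrow> j < 2*l \<Longrightarrow> in_pow v a (M $$ (i, j))"
  shows "in_pow v (a - v 2) (generic_coord l M)"
proof -
  have "in_pow v a (\<Sum>i<l-2. M $$ (i, i+1))"
    using M by (intro in_pow_sum) simp
  then have "in_pow v (a - v 2) (\<Sum>i<l-2. M $$ (i, i+1))"
    using in_pow_mono[of "a - v 2" a] valuation_two_nonneg by simp
  moreover have "in_pow v (a - v 2) (M $$ (l-2, l) / 2)"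
    using in_pow_divide[OF M] assms(1) by simp
  ultimately show ?thesis unfolding generic_coord_def by (rule in_pow_add)
qed

lemma unramified_char_add_integral:
  assumes "unramified_additive_char v \<psi>" "in_pow v 0 y"
  shows "\<psi> (x + y) = \<psi> x"
  using assms by (simp add: unramified_additive_char_def)

lemma in_pow_emat_conj_mult_diff:
  assumes m: "0 \<le> m" and u: "u \<in> Um v w l \<rho> m" and y: "y \<in> cong_sub v (2*l) k"
    and i: "i < 2*l" and j: "j < 2*l"
  shows "in_pow v (k - 8*m*int l)
    ((emat w l (- m) * (u * y) * emat w l m - emat w l (- m) * u * emat w l m) $$ (i, j))"
proof -
  have uc: "u \<in> carrier_mat (2*l) (2*l)" and uyc: "u * y \<in> carrier_mat (2*l) (2*l)"
    using Um_carrier[OF u] cong_sub_carrier[OF y] by auto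
  have "in_pow v (- (4*m*int l) + k) ((u * y) $$ (i, j) - u $$ (i, j))"
    using uc y Um_entry_bound[OF m u] i j by (rule in_pow_mult_mat_diff)
  then have bound: "in_pow v (- emat_exponent l m i + (- (4*m*int l) + k) + emat_exponent l m j)
      (w powi (- emat_exponent l m i) * ((u * y) $$ (i, j) - u $$ (i, j)) * w powi (emat_exponent l m j))"
    by (intro in_pow_mult in_pow_power_int)
  have le: "k - 8*m*int l \<le> - emat_exponent l m i + (- (4*m*int l) + k) + emat_exponent l m j"
    using abs_emat_exponent_le[OF i m] abs_emat_exponent_le[OF j m] by linarith
  have "i < dim_row (emat w l (- m) * u * emat w l m)" "j < dim_col (emat w l (- m) * u * emat w l m)"
    using i j by (simp_all add: emat_def)
  then have "(emat w l (- m) * (u * y) * emat w l m - emat w l (- m) * u * emat w l m) $$ (i, j)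
      = (emat w l (- m) * (u * y) * emat w l m) $$ (i, j) - (emat w l (- m) * u * emat w l m) $$ (i, j)"
    by (rule index_minus_mat(1))
  also have "\<dots> = w powi (- emat_exponent l m i) * ((u * y) $$ (i, j) - u $$ (i, j)) * w powi (emat_exponent l m j)"
    unfolding emat_conj_entry[OF uyc i j, of w "- m", unfolded minus_minus emat_exponent_uminus]
      emat_conj_entry[OF uc i j, of w "- m", unfolded minus_minus emat_exponent_uminus]
    by (simp only: right_diff_distrib left_diff_distrib)
  finally show ?thesis using in_pow_mono[OF le bound] by (simp only:)
qed

lemma psim_right_invariant:
  assumes \<psi>: "unramified_additive_char v \<psi>" and l: "2 \<le> l" and m: "0 \<le> m"
    and u: "u \<in> Um v w l \<rho> m" and y: "y \<in> cong_sub v (2*l) k"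
    and k: "8*m*int l + 2*m + v 2 \<le> k"
  shows "psim \<psi> w l m (u * y) = psim \<psi> w l m u"
proof -
  let ?M1 = "emat w l (- m) * (u * y) * emat w l m" and ?M0 = "emat w l (- m) * u * emat w l m"
  have carriers: "?M1 \<in> carrier_mat (2*l) (2*l)" "?M0 \<in> carrier_mat (2*l) (2*l)"
    using Um_carrier[OF u] cong_sub_carrier[OF y] emat_carrier[of w l m] emat_carrier[of w l "- m"]
    by auto
  define X where "X = w powi (-2*m) * generic_coord l (?M1 - ?M0)"
  have "in_pow v (k - 8*m*int l - v 2) (generic_coord l (?M1 - ?M0))"
    using in_pow_emat_conj_mult_diff[OF m u y] by (intro in_pow_generic_coord[OF l]) simp
  then have "in_pow v (-2*m + (k - 8*m*int l - v 2)) X"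
    unfolding X_def by (intro in_pow_mult in_pow_power_int)
  then have X: "in_pow v 0 X" by (rule in_pow_mono[rotated]) (use k in linarith)
  have split: "a * x = a * y + a * (x - y)" for a x y :: 'f
    by (simp add: algebra_simps)
  have "w powi (-2*m) * generic_coord l ?M1 = w powi (-2*m) * generic_coord l ?M0 + X"
    unfolding X_def generic_coord_diff[OF l carriers] by (rule split)
  then show ?thesis
    unfolding psim_eq_generic_coord by (simp only: unramified_char_add_integral[OF \<psi> X])
qed

end

section \<open>Whittaker functions\<close>

lemma whittaker_model_right_invariant:
  assumes \<pi>: "smooth_rep v l \<rho> sm \<pi>" and W: "W \<in> whittaker_model l \<rho> \<pi> \<Gamma>"
  obtains m0 where "1 \<le> m0" "\<And>g k. g \<in> SO l \<rho> \<Longrightarrow> k \<in> Kcong v l \<rho> m0 \<Longrightarrow> W (g * k) = W g"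
proof -
  obtain x where x: "\<And>g. g \<in> SO l \<rho> \<Longrightarrow> W g = \<Gamma> (\<pi> g x)"
    using W by (auto simp: whittaker_model_def)
  have "\<exists>m0\<ge>1. \<forall>k\<in>Kcong v l \<rho> m0. \<pi> k x = x"
    using \<pi> by (simp add: smooth_rep_def)
  then obtain m0 where m0: "1 \<le> m0" and fixed: "\<And>k. k \<in> Kcong v l \<rho> m0 \<Longrightarrow> \<pi> k x = x"
    by blast
  have "W (g * k) = W g" if g: "g \<in> SO l \<rho>" and k: "k \<in> Kcong v l \<rho> m0" for g k
  proof -
    have kS: "k \<in> SO l \<rho>" using k by (simp add: Kcong_eq)
    have "\<pi> (g * k) = \<pi> g \<circ> \<pi> k" using \<pi> g kS by (simp add: smooth_rep_def)
    then show ?thesis using x[OF SO_mult[OF g kS]] x[OF g] fixed[OF k] by simp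
  qed
  with m0 that show thesis by blast
qed

lemma whittaker_model_sum_right_translates:
  assumes \<pi>: "smooth_rep v l \<rho> sm \<pi>" and \<Gamma>: "whittaker_functional \<psi> l \<rho> sm \<pi> \<Gamma>"
    and W: "W \<in> whittaker_model l \<rho> \<pi> \<Gamma>" and u: "\<And>i. i \<in> I \<Longrightarrow> u i \<in> SO l \<rho>"
  shows "(\<lambda>g. \<Sum>i\<in>I. c i * W (g * u i)) \<in> whittaker_model l \<rho> \<pi> \<Gamma>"
proof -
  obtain x where x: "\<And>g. g \<in> SO l \<rho> \<Longrightarrow> W g = \<Gamma> (\<pi> g x)"
    using W by (auto simp: whittaker_model_def)
  define x' where "x' = (\<Sum>i\<in>I. sm (c i) (\<pi> (u i) x))"
  have "(\<Sum>i\<in>I. c i * W (g * u i)) = \<Gamma> (\<pi> g x')" if g: "g \<in> SO l \<rho>" for g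
  proof -
    have hom: "module_hom sm sm (\<pi> g)" "module_hom sm (*) \<Gamma>"
      using \<pi> \<Gamma> g by (simp_all add: smooth_rep_def whittaker_functional_def module_hom_iff_linear)
    have "\<Gamma> (\<pi> g x') = (\<Sum>i\<in>I. c i * \<Gamma> (\<pi> g (\<pi> (u i) x)))"
      unfolding x'_def module_hom.sum[OF hom(1)] module_hom.sum[OF hom(2)]
        module_hom.scale[OF hom(1)] module_hom.scale[OF hom(2)] ..
    also have "\<dots> = (\<Sum>i\<in>I. c i * W (g * u i))"
    proof (rule sum.cong[OF refl])
      fix i assume i: "i \<in> I"
      have "\<pi> (g * u i) = \<pi> g \<circ> \<pi> (u i)" using \<pi> g u[OF i] by (simp add: smooth_rep_def)
      then show "c i * \<Gamma> (\<pi> g (\<pi> (u i) x)) = c i * W (g * u i)"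
        using x[OF SO_mult[OF g u[OF i]]] by simp
    qed
    finally show ?thesis by simp
  qed
  then show ?thesis unfolding whittaker_model_def by blast
qed

context local_field
begin

lemma Wm_eq_lcoset_avg:
  assumes \<psi>: "unramified_additive_char v \<psi>" and l: "2 \<le> l" and m: "0 \<le> m"
    and W: "\<And>g k. g \<in> SO l \<rho> \<Longrightarrow> k \<in> Kcong v l \<rho> m0 \<Longrightarrow> W (g * k) = W g"
    and k0: "1 \<le> k0" "m0 \<le> k0" "8*m*int l + 2*m + v 2 \<le> k0" and g: "g \<in> SO l \<rho>"
  shows "Wm v w \<psi> l \<rho> m W g = lcoset_avg (mat_group (2*l) (Um v w l \<rho> m))
    (Um v w l \<rho> m \<inter> cong_sub v (2*l) k0) (\<lambda>u. inverse (psim \<psi> w l m u) * W (g * u))"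
  unfolding Wm_def
proof (rule haar_avg_eq_lcoset_avg[OF group_Um[OF m] Um_cong_subgroup[OF m] finite_lcosets_Um[OF m] k0(1)])
  show "\<forall>u\<in>Um v w l \<rho> m. \<forall>y\<in>Um v w l \<rho> m \<inter> cong_sub v (2*l) k0.
      inverse (psim \<psi> w l m (u * y)) * W (g * (u * y)) = inverse (psim \<psi> w l m u) * W (g * u)"
  proof (intro ballI)
    fix u y assume u: "u \<in> Um v w l \<rho> m" and y: "y \<in> Um v w l \<rho> m \<inter> cong_sub v (2*l) k0"
    have uS: "u \<in> SO l \<rho>" using u by (simp add: Um_iff)
    have "y \<in> Kcong v l \<rho> m0"
      using y cong_sub_antimono[OF k0(2)] by (auto simp: Kcong_eq Um_iff)
    moreover have "g * (u * y) = g * u * y"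
      using assoc_mult_mat[OF SO_carrier[OF g] SO_carrier[OF uS] Um_carrier[of y l \<rho> m]] y by simp
    ultimately have "W (g * (u * y)) = W (g * u)"
      using W[OF SO_mult[OF g uS]] by simp
    then show "inverse (psim \<psi> w l m (u * y)) * W (g * (u * y)) = inverse (psim \<psi> w l m u) * W (g * u)"
      using psim_right_invariant[OF \<psi> l m u _ k0(3)] y by simp
  qed
qed auto

end

theorem lemma4p3:
  fixes v :: "'f::field_char_0 \<Rightarrow> int" and w :: 'f and \<psi> :: "'f \<Rightarrow> complex"
    and \<rho> :: 'f and l :: nat
    and sm :: "complex \<Rightarrow> 'v::ab_group_add \<Rightarrow> 'v" and \<pi> :: "'f mat \<Rightarrow> 'v \<Rightarrow> 'v"
    and \<Gamma> :: "'v \<Rightarrow> complex" and W :: "'f mat \<Rightarrow> complex" and m :: int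
  assumes "nonarch_local_field v"
    and "uniformizer v w"
    and "unramified_additive_char v \<psi>"
    and "\<not> (\<exists>x. x * x = \<rho>)"
    and "l \<ge> 2"
    and "smooth_rep v l \<rho> sm \<pi>"
    and "irreducible_rep l \<rho> sm \<pi>"
    and "whittaker_functional \<psi> l \<rho> sm \<pi> \<Gamma>"
    and "\<Gamma> \<noteq> (\<lambda>_. 0)"
    and "W \<in> whittaker_model l \<rho> \<pi> \<Gamma>"
    and "W (1\<^sub>m (2*l)) = 1"
    and "m \<ge> 1"
  shows "Wm v w \<psi> l \<rho> m W \<in> whittaker_model l \<rho> \<pi> \<Gamma>"
proof -
  interpret local_field v w using assms(1,2) by unfold_locales
  have m: "0 \<le> m" using assms(12) by simp
  obtain m0 where m0: "1 \<le> m0" and W_inv: "\<And>g k. g \<in> SO l \<rho> \<Longrightarrow> k \<in> Kcong v l \<rho> m0 \<Longrightarrow> W (g * k) = W g"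
    using whittaker_model_right_invariant[OF assms(6,10)] by blast
  define k0 where "k0 = max m0 (8*m*int l + 2*m + v 2)"
  have k0: "1 \<le> k0" "m0 \<le> k0" "8*m*int l + 2*m + v 2 \<le> k0"
    using m0 by (auto simp: k0_def)
  let ?U = "Um v w l \<rho> m"
  let ?cosets = "lcosets\<^bsub>mat_group (2*l) ?U\<^esub> (?U \<inter> cong_sub v (2*l) k0)"
  let ?rep = "\<lambda>C. SOME u. u \<in> C"
  have "Wm v w \<psi> l \<rho> m W g
      = (\<Sum>C\<in>?cosets. inverse (psim \<psi> w l m (?rep C)) / of_nat (card ?cosets) * W (g * ?rep C))"
    if "g \<in> SO l \<rho>" for g
    using Wm_eq_lcoset_avg[OF assms(3,5) m W_inv k0 that]
    by (simp add: lcoset_avg_def sum_divide_distrib times_divide_eq_left)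
  moreover have "?rep C \<in> SO l \<rho>" if "C \<in> ?cosets" for C
    using group.lcoset_some_carrier[OF group_Um[OF m] Um_cong_subgroup[OF m] that] k0(1)
    by (simp add: Um_iff)
  then have "(\<lambda>g. \<Sum>C\<in>?cosets. inverse (psim \<psi> w l m (?rep C)) / of_nat (card ?cosets) * W (g * ?rep C))
      \<in> whittaker_model l \<rho> \<pi> \<Gamma>"
    by (rule whittaker_model_sum_right_translates[OF assms(6,8,10)])
  ultimately show ?thesis by (simp add: whittaker_model_def)
qed

end
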